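(* Let $(M,\cdot,1)$ be a monoid, $\Sigma$ a finite alphabet, and $A=(Q,\Sigma,u,i_u,\delta,w,\rho)$ an accessible $M$-DFA. If there do not exist words $\alpha,\beta\in\Sigma^*$, an $M$-language $\ell'$ and elements $m,m'\in M$ such that $u\alpha\neq u\beta$, $\Delta_\alpha(\mathcal{A})=m\cdot\ell'$ and $\Delta_\beta(\mathcal{A})=m'\cdot\ell'$, then $A$ is minimal.
   Context: An $M$-language is a function $\Sigma^*\to M$; $(m\cdot\ell)(\gamma)=m\cdot\ell(\gamma)$ and $\Delta_\alpha(\ell)(\gamma)=\ell(\alpha\gamma)$. An $M$-DFA is $A=(Q,\Sigma,u,i_u,\delta,w,\rho)$ with $Q$ finite nonempty, initial state $u$, initial value $i_u\in M$, $\delta:Q\times\Sigma\to Q$, $w:Q\times\Sigma\to M$, $\rho:Q\to M$. Write $q\alpha$ for the extended transition and $w^*(q,\varepsilon)=1$, $w^*(q,\alpha\sigma)=w^*(q,\alpha)\cdot w(q\alpha,\sigma)$. $A$ recognizes $\mathcal{A}(\alpha)=i_u\cdot w^*(u,\alpha)\cdot\rho(u\alpha)$. $A$ is accessible if $Q=\{u\alpha\mid\alpha\in\Sigma^*\}$; two $M$-DFAs are equivalent if they recognize the same $M$-language; $A$ is minimal if no equivalent $M$-DFA has fewer states. *)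

theory Defs
  imports Main
begin

type_synonym ('a, 'm) mlang = "'a list \<Rightarrow> 'm"

definition lscale :: "'m::monoid_mult \<Rightarrow> ('a, 'm) mlang \<Rightarrow> ('a, 'm) mlang" where
  "lscale m l = (\<lambda>\<gamma>. m * l \<gamma>)"

definition lderiv :: "'a list \<Rightarrow> ('a, 'm) mlang \<Rightarrow> ('a, 'm) mlang" where
  "lderiv \<alpha> l = (\<lambda>\<gamma>. l (\<alpha> @ \<gamma>))"

text \<open>An M-DFA (Q, Sigma, u, i_u, delta, w, rho); Sigma is the (finite) type 'a.\<close>
record ('s, 'a, 'm) mdfa =
  states :: "'s set"
  init :: 's
  ival :: 'm
  trans :: "'s \<Rightarrow> 'a \<Rightarrow> 's"
  wt :: "'s \<Rightarrow> 'a \<Rightarrow> 'm"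
  fin :: "'s \<Rightarrow> 'm"

definition is_mdfa :: "('s, 'a, 'm) mdfa \<Rightarrow> bool" where
  "is_mdfa A \<longleftrightarrow> finite (states A) \<and> states A \<noteq> {} \<and> init A \<in> states A \<and>
     (\<forall>q\<in>states A. \<forall>\<sigma>. trans A q \<sigma> \<in> states A)"

definition dstar :: "('s, 'a, 'm) mdfa \<Rightarrow> 's \<Rightarrow> 'a list \<Rightarrow> 's" where
  "dstar A q \<alpha> = foldl (trans A) q \<alpha>"

fun wstar :: "('s, 'a, 'm::monoid_mult) mdfa \<Rightarrow> 's \<Rightarrow> 'a list \<Rightarrow> 'm" where
  "wstar A q \<alpha> = (if \<alpha> = [] then 1
     else wstar A q (butlast \<alpha>) * wt A (dstar A q (butlast \<alpha>)) (last \<alpha>))"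

declare wstar.simps[simp del]

definition recog :: "('s, 'a, 'm::monoid_mult) mdfa \<Rightarrow> ('a, 'm) mlang" where
  "recog A = (\<lambda>\<alpha>. ival A * wstar A (init A) \<alpha> * fin A (dstar A (init A) \<alpha>))"

definition accessible :: "('s, 'a, 'm) mdfa \<Rightarrow> bool" where
  "accessible A \<longleftrightarrow> states A = {dstar A (init A) \<alpha> | \<alpha>. True}"

text \<open>Minimality: no equivalent M-DFA has fewer states.  Competing automata have states
  drawn from nat; every finite state set can be relabelled into nat, so this loses nothing.\<close>
definition minimal :: "('s, 'a, 'm::monoid_mult) mdfa \<Rightarrow> bool" where
  "minimal A \<longleftrightarrow> (\<forall>B :: (nat, 'a, 'm) mdfa.
      is_mdfa B \<and> recog B = recog A \<longrightarrow> card (states A) \<le> card (states B))"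

end

theory Submission
  imports Defs
begin

text \<open>In any M-DFA B the derivative of the recognised language by a word \<alpha> is a scalar multiple
  of the language recognised from the state reached by \<alpha>.  Hence two words leading to the same
  state of B have proportional derivatives, and by hypothesis they then lead to the same state of A.
  So the state of A reached by a word is a function of the state of B reached by it, and since A is
  accessible, A has at most as many states as B.\<close>

lemma dstar_append: "dstar A q (xs @ ys) = dstar A (dstar A q xs) ys"
  by (simp add: dstar_def)

lemma wstar_Nil [simp]: "wstar A q [] = 1"
  by (subst wstar.simps) simp

lemma wstar_snoc: "wstar A q (xs @ [x]) = wstar A q xs * wt A (dstar A q xs) x"
  by (subst wstar.simps) simp

lemma wstar_append: "wstar A q (xs @ ys) = wstar A q xs * wstar A (dstar A q xs) ys"
proof (induction ys rule: rev_induct)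
  case Nil
  then show ?case by simp
next
  case (snoc x ys)
  have "wstar A q (xs @ ys @ [x]) = wstar A q (xs @ ys) * wt A (dstar A q (xs @ ys)) x"
    using wstar_snoc[of A q "xs @ ys" x] by simp
  also have "\<dots> = wstar A q xs * (wstar A (dstar A q xs) ys * wt A (dstar A (dstar A q xs) ys) x)"
    using snoc by (simp add: dstar_append mult.assoc)
  also have "\<dots> = wstar A q xs * wstar A (dstar A q xs) (ys @ [x])"
    by (simp add: wstar_snoc)
  finally show ?case by simp
qed

lemma dstar_in_states: "is_mdfa A \<Longrightarrow> q \<in> states A \<Longrightarrow> dstar A q xs \<in> states A"
  unfolding dstar_def is_mdfa_def by (induction xs arbitrary: q) auto

lemma range_dstar_init_subset: "is_mdfa A \<Longrightarrow> range (dstar A (init A)) \<subseteq> states A"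
  using dstar_in_states[of A "init A"] by (auto simp: is_mdfa_def)

lemma accessible_iff_range: "accessible A \<longleftrightarrow> states A = range (dstar A (init A))"
  by (auto simp: accessible_def)

definition state_lang :: "('s, 'a, 'm::monoid_mult) mdfa \<Rightarrow> 's \<Rightarrow> ('a, 'm) mlang" where
  "state_lang A q = (\<lambda>\<gamma>. wstar A q \<gamma> * fin A (dstar A q \<gamma>))"

lemma lderiv_recog:
  "lderiv \<alpha> (recog A) =
     lscale (ival A * wstar A (init A) \<alpha>) (state_lang A (dstar A (init A) \<alpha>))"
  by (rule ext) (simp add: lderiv_def lscale_def recog_def state_lang_def
      wstar_append dstar_append mult.assoc)

lemma lderiv_recog_proportional:
  assumes "dstar A (init A) \<alpha> = dstar A (init A) \<beta>"
  shows "\<exists>l m m'. lderiv \<alpha> (recog A) = lscale m l \<and> lderiv \<beta> (recog A) = lscale m' l"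
  using lderiv_recog[of \<alpha> A] lderiv_recog[of \<beta> A] unfolding assms by blast

lemma card_range_le_if_factors:
  assumes "finite (range g)" and "\<And>x y. g x = g y \<Longrightarrow> f x = f y"
  shows "card (range f) \<le> card (range g)"
proof -
  have "range f = (f \<circ> inv g) ` range g"
    unfolding image_comp
  proof (rule image_cong)
    show "f x = (f \<circ> inv g \<circ> g) x" for x
      using assms(2)[OF f_inv_into_f[of "g x" g UNIV]] by simp
  qed simp
  then show ?thesis
    using card_image_le[OF assms(1)] by simp
qed

theorem mainTheorem9:
  fixes A :: "('s, 'a::finite, 'm::monoid_mult) mdfa"
  assumes "is_mdfa A"
    and "accessible A"
    and "\<not> (\<exists>\<alpha> \<beta> (l' :: ('a, 'm) mlang) m m'.
             dstar A (init A) \<alpha> \<noteq> dstar A (init A) \<beta> \<and>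
             lderiv \<alpha> (recog A) = lscale m l' \<and>
             lderiv \<beta> (recog A) = lscale m' l')"
  shows "minimal A"
  unfolding minimal_def
proof (intro allI impI, elim conjE)
  fix B :: "(nat, 'a, 'm) mdfa"
  assume B: "is_mdfa B" and equiv: "recog B = recog A"
  have B_finite: "finite (states B)"
    using B by (simp add: is_mdfa_def)
  note B_reached = range_dstar_init_subset[OF B]
  have factors: "dstar A (init A) \<alpha> = dstar A (init A) \<beta>"
    if "dstar B (init B) \<alpha> = dstar B (init B) \<beta>" for \<alpha> \<beta>
    using lderiv_recog_proportional[OF that, unfolded equiv] assms(3) by blast
  have "card (states A) = card (range (dstar A (init A)))"
    using assms(2) by (simp add: accessible_iff_range)
  also have "\<dots> \<le> card (range (dstar B (init B)))"
    using finite_subset[OF B_reached B_finite] factors by (rule card_range_le_if_factors)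
  also have "\<dots> \<le> card (states B)"
    using card_mono[OF B_finite B_reached] .
  finally show "card (states A) \<le> card (states B)" .
qed

end
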